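(* Let $\mathcal W$ be a discrete memoryless channel from finite $\mathcal X$ to finite $\mathcal Y$. Then: (1) $U(\mathcal W)\ge0$, with equality if and only if $\mathcal W(\cdot|x)$ does not depend on $x\in\mathcal X$. (2) $U(\mathcal W)<\infty$ if and only if there exists $y\in\mathcal Y$ with $\mathcal W(y|x)>0$ for all $x\in\mathcal X$. (3) The map $\mathcal W\mapsto U(\mathcal W)$ is convex on the set of channels from $\mathcal X$ to $\mathcal Y$.
   Context: $D(P\|Q)=\sum P\log(P/Q)$ ($0\log(0/q)=0$; $+\infty$ if $P\not\ll Q$). $U(\mathcal W)=\max_{P_X\in\mathcal P(\mathcal X)}\min_{Q_Y\in\mathcal P(\mathcal Y)}D(P_X\times Q_Y\|P_{XY})$, $P_{XY}(x,y)=P_X(x)\mathcal W(y|x)$. *)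

theory Defs
  imports "HOL-Analysis.Analysis"
begin

definition distr :: "('a::finite \<Rightarrow> real) \<Rightarrow> bool" where
  "distr P \<longleftrightarrow> (\<forall>a. 0 \<le> P a) \<and> (\<Sum>a\<in>UNIV. P a) = 1"

definition channel :: "('x::finite \<Rightarrow> 'y::finite \<Rightarrow> real) \<Rightarrow> bool" where
  "channel W \<longleftrightarrow> (\<forall>x. distr (W x))"

definition KL :: "('a::finite \<Rightarrow> real) \<Rightarrow> ('a \<Rightarrow> real) \<Rightarrow> ereal" where
  "KL P Q = (if \<forall>a. P a \<noteq> 0 \<longrightarrow> Q a \<noteq> 0
             then ereal (\<Sum>a\<in>UNIV. if P a = 0 then 0 else P a * ln (P a / Q a))
             else \<infinity>)"

definition U :: "('x::finite \<Rightarrow> 'y::finite \<Rightarrow> real) \<Rightarrow> ereal" where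
  "U W = (SUP P\<in>{P. distr P}. INF Q\<in>{Q. distr Q}.
            KL (\<lambda>(x,y). P x * Q y) (\<lambda>(x,y). P x * W x y))"

end

theory Submission
  imports Defs
begin

text \<open>Since \<open>D(P \<times> Q \<parallel> P W) = \<Sum>\<^sub>x P(x) D(Q \<parallel> W(\<cdot>|x))\<close>, everything reduces to properties of
  the divergence. Nonnegativity is Gibbs' inequality, and for a constant channel the choice
  \<open>Q = W(\<cdot>|x)\<close> makes the objective vanish. If two rows \<open>W(\<cdot>|x) \<noteq> W(\<cdot>|x')\<close> differ, the input
  with mass 1/2 on \<open>x\<close> and \<open>x'\<close> gives, for every \<open>Q\<close>, the Bhattacharyya bound
  \<open>1 - \<Sum>\<^sub>y sqrt(W(y|x) W(y|x')) > 0\<close>. If some output \<open>y\<^sub>0\<close> is reachable from every input, the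
  point mass at \<open>y\<^sub>0\<close> bounds the objective by \<open>\<Sum>\<^sub>x -ln W(y\<^sub>0|x)\<close> uniformly in \<open>P\<close>; otherwise,
  under the uniform input every \<open>Q\<close> charges an output that some row misses. Convexity follows
  from joint convexity of the divergence (the log-sum inequality): mixing any
  \<open>Q\<^sub>1, Q\<^sub>2\<close> with the channel weights bounds the inner infimum for the mixed channel.\<close>

text \<open>For \<open>a \<noteq> 0 = b\<close> the value is junk (\<open>ln 0\<close>); it is only ever used under absolute continuity.\<close>
definition kl_term :: "real \<Rightarrow> real \<Rightarrow> real" where
  "kl_term a b = (if a = 0 then 0 else a * ln (a / b))"

lemma KL_eq_sum_kl_term:
  "KL P Q = (if \<forall>a. P a \<noteq> 0 \<longrightarrow> Q a \<noteq> 0 then ereal (\<Sum>a\<in>UNIV. kl_term (P a) (Q a)) else \<infinity>)"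
  unfolding KL_def kl_term_def by simp

lemma kl_term_ge_diff:
  assumes "0 \<le> a" "0 \<le> b" "a \<noteq> 0 \<longrightarrow> b \<noteq> 0"
  shows "a - b \<le> kl_term a b"
proof (cases "a = 0")
  case True
  then show ?thesis using assms by (simp add: kl_term_def)
next
  case False
  then have a: "a > 0" and b: "b > 0" using assms by auto
  have "a * ln (b / a) \<le> a * (b / a - 1)"
    using a b by (intro mult_left_mono ln_le_minus_one) auto
  also have "\<dots> = b - a" using a by (simp add: field_simps)
  finally show ?thesis using a b by (simp add: kl_term_def ln_div right_diff_distrib)
qed

lemma kl_term_mult:
  assumes "0 \<le> c"
  shows "kl_term (c * a) (c * b) = c * kl_term a b"
  using assms by (cases "c = 0") (auto simp: kl_term_def)

lemma kl_term_rescale: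
  assumes "0 \<le> a" "0 \<le> b" "a \<noteq> 0 \<longrightarrow> b \<noteq> 0" "0 < r"
  shows "kl_term a b = kl_term a (r * b) + a * ln r"
  using assms by (cases "a = 0") (auto simp: kl_term_def ln_div ln_mult algebra_simps)

lemma kl_term_sum_le:
  assumes "finite I"
    and nonneg: "\<And>i. i \<in> I \<Longrightarrow> 0 \<le> x i" "\<And>i. i \<in> I \<Longrightarrow> 0 \<le> y i"
    and abs_cont: "\<And>i. i \<in> I \<Longrightarrow> x i \<noteq> 0 \<Longrightarrow> y i \<noteq> 0"
  shows "kl_term (\<Sum>i\<in>I. x i) (\<Sum>i\<in>I. y i) \<le> (\<Sum>i\<in>I. kl_term (x i) (y i))"
proof (cases "(\<Sum>i\<in>I. x i) = 0")
  case True
  then have "\<forall>i\<in>I. x i = 0" using sum_nonneg_eq_0_iff[OF assms(1)] nonneg by blast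
  then show ?thesis using True by (simp add: kl_term_def)
next
  case False
  define X where "X = (\<Sum>i\<in>I. x i)"
  define Y where "Y = (\<Sum>i\<in>I. y i)"
  obtain j where j: "j \<in> I" "x j \<noteq> 0" using False by (meson sum.neutral)
  have "X > 0" using False nonneg by (simp add: X_def order_less_le sum_nonneg)
  have "0 < y j" using j nonneg abs_cont by (simp add: order_less_le)
  also have "y j \<le> Y" unfolding Y_def using assms j by (intro member_le_sum) auto
  finally have "Y > 0" .
  \<comment> \<open>Rescaling every \<open>y i\<close> by \<open>X / Y\<close> makes the two sums agree, so Gibbs' inequality applies.\<close>
  have "(\<Sum>i\<in>I. X / Y * y i) = X / Y * Y" by (simp only: Y_def sum_distrib_left)
  then have "kl_term X Y = (\<Sum>i\<in>I. x i - X / Y * y i) + X * ln (X / Y)"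
    using \<open>X > 0\<close> \<open>Y > 0\<close> by (simp add: kl_term_def ln_div sum_subtractf X_def)
  also have "\<dots> \<le> (\<Sum>i\<in>I. kl_term (x i) (X / Y * y i)) + X * ln (X / Y)"
    using \<open>X > 0\<close> \<open>Y > 0\<close> nonneg abs_cont by (auto intro!: sum_mono kl_term_ge_diff)
  also have "\<dots> = (\<Sum>i\<in>I. kl_term (x i) (y i))"
    using \<open>X > 0\<close> \<open>Y > 0\<close> nonneg abs_cont
    by (simp add: kl_term_rescale[of "x _" "y _" "X / Y"] sum.distrib X_def sum_distrib_right)
  finally show ?thesis by (simp add: X_def Y_def)
qed

lemma kl_term_add_le:
  assumes "0 \<le> x1" "0 \<le> x2" "0 \<le> y1" "0 \<le> y2" "x1 \<noteq> 0 \<longrightarrow> y1 \<noteq> 0" "x2 \<noteq> 0 \<longrightarrow> y2 \<noteq> 0"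
  shows "kl_term (x1 + x2) (y1 + y2) \<le> kl_term x1 y1 + kl_term x2 y2"
proof -
  have "kl_term (\<Sum>i\<in>UNIV. if i then x1 else x2) (\<Sum>i\<in>UNIV. if i then y1 else y2)
      \<le> (\<Sum>i\<in>UNIV. kl_term (if i then x1 else x2) (if i then y1 else y2))"
    by (rule kl_term_sum_le) (use assms in auto)
  then show ?thesis by (simp add: UNIV_bool add.commute)
qed

lemma kl_term_sqrt_mult:
  assumes "0 \<le> q" "0 \<le> a" "0 \<le> b" "q \<noteq> 0 \<longrightarrow> a \<noteq> 0 \<and> b \<noteq> 0"
  shows "kl_term q (sqrt (a * b)) = (kl_term q a + kl_term q b) / 2"
  using assms by (cases "q = 0") (auto simp: kl_term_def ln_div ln_mult ln_sqrt field_simps)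

lemma KL_ge_sum_diff:
  assumes "\<And>a. 0 \<le> A a" "\<And>a. 0 \<le> B a"
  shows "ereal (sum A UNIV - sum B UNIV) \<le> KL A B"
proof (cases "\<forall>a. A a \<noteq> 0 \<longrightarrow> B a \<noteq> 0")
  case True
  have "sum A UNIV - sum B UNIV = (\<Sum>a\<in>UNIV. A a - B a)" by (simp add: sum_subtractf)
  also have "\<dots> \<le> (\<Sum>a\<in>UNIV. kl_term (A a) (B a))"
    using assms True by (intro sum_mono kl_term_ge_diff) auto
  finally show ?thesis using True by (simp add: KL_eq_sum_kl_term)
qed (auto simp: KL_eq_sum_kl_term)

lemma KL_nonneg:
  assumes "distr A" "distr B"
  shows "0 \<le> KL A B"
  using KL_ge_sum_diff[of A B] assms by (simp add: distr_def zero_ereal_def)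

lemma KL_self: "KL A A = 0"
  by (auto simp: KL_eq_sum_kl_term kl_term_def zero_ereal_def intro!: sum.neutral)

lemma KL_point_mass:
  assumes "0 < B b"
  shows "KL (\<lambda>a. if a = b then 1 else 0) B = ereal (- ln (B b))"
proof -
  have "(\<Sum>a\<in>UNIV. kl_term (if a = b then 1 else 0) (B a)) = kl_term 1 (B b)"
    by (subst sum.remove[of _ b]) (auto simp: kl_term_def)
  then show ?thesis using assms by (simp add: KL_eq_sum_kl_term kl_term_def ln_div)
qed

lemma KL_jointly_convex:
  assumes t: "0 < t" "t < 1"
    and nonneg: "\<And>a. 0 \<le> A1 a" "\<And>a. 0 \<le> A2 a" "\<And>a. 0 \<le> B1 a" "\<And>a. 0 \<le> B2 a"
  shows "KL (\<lambda>a. t * A1 a + (1 - t) * A2 a) (\<lambda>a. t * B1 a + (1 - t) * B2 a)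
    \<le> ereal t * KL A1 B1 + ereal (1 - t) * KL A2 B2"
proof (cases "KL A1 B1 = \<infinity> \<or> KL A2 B2 = \<infinity>")
  case True
  have "KL A1 B1 \<noteq> -\<infinity>" "KL A2 B2 \<noteq> -\<infinity>" by (simp_all add: KL_def)
  with True t have "ereal t * KL A1 B1 + ereal (1 - t) * KL A2 B2 = \<infinity>" by auto
  then show ?thesis by (metis ereal_less_eq(1))
next
  case False
  then have ac1: "\<And>a. A1 a \<noteq> 0 \<Longrightarrow> B1 a \<noteq> 0" and ac2: "\<And>a. A2 a \<noteq> 0 \<Longrightarrow> B2 a \<noteq> 0"
    by (auto simp: KL_eq_sum_kl_term split: if_splits)
  have ac: "t * B1 a + (1 - t) * B2 a \<noteq> 0" if "t * A1 a + (1 - t) * A2 a \<noteq> 0" for a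
    using that t nonneg[of a] ac1[of a] ac2[of a]
    by (smt (verit) mult_nonneg_nonneg mult_pos_pos)
  have "(\<Sum>a\<in>UNIV. kl_term (t * A1 a + (1 - t) * A2 a) (t * B1 a + (1 - t) * B2 a))
      \<le> (\<Sum>a\<in>UNIV. kl_term (t * A1 a) (t * B1 a) + kl_term ((1 - t) * A2 a) ((1 - t) * B2 a))"
    using t nonneg ac1 ac2 by (intro sum_mono kl_term_add_le) auto
  also have "\<dots> = t * (\<Sum>a\<in>UNIV. kl_term (A1 a) (B1 a)) + (1 - t) * (\<Sum>a\<in>UNIV. kl_term (A2 a) (B2 a))"
    using t by (simp add: kl_term_mult sum.distrib sum_distrib_left)
  finally show ?thesis using ac ac1 ac2 by (auto simp: KL_eq_sum_kl_term)
qed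

lemma KL_product_eq_sum:
  assumes "\<And>x. 0 \<le> P x"
  shows "KL (\<lambda>(x, y). P x * Q y) (\<lambda>(x, y). P x * R x y) = (\<Sum>x\<in>UNIV. ereal (P x) * KL Q (R x))"
proof (cases "\<forall>x. P x \<noteq> 0 \<longrightarrow> (\<forall>y. Q y \<noteq> 0 \<longrightarrow> R x y \<noteq> 0)")
  case True
  have "ereal (P x) * KL Q (R x) = ereal (\<Sum>y\<in>UNIV. kl_term (P x * Q y) (P x * R x y))" for x
  proof (cases "P x = 0")
    case False
    then show ?thesis
      using True by (simp add: KL_eq_sum_kl_term kl_term_mult[OF assms] sum_distrib_left)
  qed (simp add: kl_term_def flip: zero_ereal_def)
  then have "(\<Sum>x\<in>UNIV. ereal (P x) * KL Q (R x)) = ereal (\<Sum>(x, y)\<in>UNIV. kl_term (P x * Q y) (P x * R x y))"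
    by (simp add: sum.cartesian_product flip: UNIV_Times_UNIV)
  then show ?thesis using True by (auto simp: KL_eq_sum_kl_term case_prod_beta)
next
  case False
  then obtain x y where xy: "P x \<noteq> 0" "Q y \<noteq> 0" "R x y = 0" by blast
  then have "KL Q (R x) = \<infinity>" by (auto simp: KL_def)
  then have "ereal (P x) * KL Q (R x) = \<infinity>" using assms[of x] xy by (simp add: order_less_le)
  then have "(\<Sum>x\<in>UNIV. ereal (P x) * KL Q (R x)) = \<infinity>" by (metis finite UNIV_I sum_Pinfty)
  moreover have "KL (\<lambda>(x, y). P x * Q y) (\<lambda>(x, y). P x * R x y) = \<infinity>"
    using xy by (auto simp: KL_def split: prod.splits intro!: exI[of _ "(x, y)"])
  ultimately show ?thesis by simp
qed

lemma sqrt_mult_less_mean: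
  fixes a b :: real
  assumes "0 \<le> a" "0 \<le> b" "a \<noteq> b"
  shows "sqrt (a * b) < (a + b) / 2"
proof -
  have "0 < (sqrt a - sqrt b)\<^sup>2" using assms by simp
  then show ?thesis using assms by (simp add: power2_eq_square algebra_simps real_sqrt_mult)
qed

lemma KL_mean_ge_one_minus_bhattacharyya:
  assumes "distr Q" "\<And>y. 0 \<le> A y" "\<And>y. 0 \<le> B y"
  shows "ereal (1 - (\<Sum>y\<in>UNIV. sqrt (A y * B y))) \<le> ereal (1/2) * KL Q A + ereal (1/2) * KL Q B"
proof (cases "KL Q A = \<infinity> \<or> KL Q B = \<infinity>")
  case True
  have "KL Q A \<noteq> -\<infinity>" "KL Q B \<noteq> -\<infinity>" by (simp_all add: KL_def)
  with True show ?thesis by auto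
next
  case False
  then have ac: "\<And>y. Q y \<noteq> 0 \<Longrightarrow> A y \<noteq> 0 \<and> B y \<noteq> 0"
    by (auto simp: KL_eq_sum_kl_term split: if_splits)
  have Q: "\<And>y. 0 \<le> Q y" "sum Q UNIV = 1" using assms(1) by (auto simp: distr_def)
  have "1 - (\<Sum>y\<in>UNIV. sqrt (A y * B y)) = (\<Sum>y\<in>UNIV. Q y - sqrt (A y * B y))"
    using Q by (simp add: sum_subtractf)
  also have "\<dots> \<le> (\<Sum>y\<in>UNIV. kl_term (Q y) (sqrt (A y * B y)))"
    using Q assms ac by (intro sum_mono kl_term_ge_diff) auto
  also have "\<dots> = 1/2 * (\<Sum>y\<in>UNIV. kl_term (Q y) (A y)) + 1/2 * (\<Sum>y\<in>UNIV. kl_term (Q y) (B y))"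
    using Q assms ac by (simp add: kl_term_sqrt_mult add_divide_distrib sum.distrib sum_divide_distrib)
  finally show ?thesis using ac by (simp add: KL_eq_sum_kl_term)
qed

definition product_divergence ::
    "('x::finite \<Rightarrow> 'y::finite \<Rightarrow> real) \<Rightarrow> ('x \<Rightarrow> real) \<Rightarrow> ('y \<Rightarrow> real) \<Rightarrow> ereal" where
  "product_divergence W P Q = KL (\<lambda>(x, y). P x * Q y) (\<lambda>(x, y). P x * W x y)"

definition min_product_divergence :: "('x::finite \<Rightarrow> 'y::finite \<Rightarrow> real) \<Rightarrow> ('x \<Rightarrow> real) \<Rightarrow> ereal" where
  "min_product_divergence W P = (INF Q\<in>{Q. distr Q}. product_divergence W P Q)"

lemma U_eq_SUP_min_product_divergence: "U W = (SUP P\<in>{P. distr P}. min_product_divergence W P)"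
  by (simp add: U_def min_product_divergence_def product_divergence_def)

lemma product_divergence_eq_sum:
  assumes "distr P"
  shows "product_divergence W P Q = (\<Sum>x\<in>UNIV. ereal (P x) * KL Q (W x))"
  using assms by (simp add: product_divergence_def KL_product_eq_sum distr_def)

lemma product_divergence_nonneg:
  assumes "channel W" "distr P" "distr Q"
  shows "0 \<le> product_divergence W P Q"
  using assms KL_nonneg[of Q]
  by (auto simp: product_divergence_eq_sum channel_def distr_def intro!: sum_nonneg ereal_0_le_mult)

lemma min_product_divergence_nonneg:
  assumes "channel W" "distr P"
  shows "0 \<le> min_product_divergence W P"
  unfolding min_product_divergence_def using assms by (auto intro: INF_greatest product_divergence_nonneg)

lemma min_product_divergence_le_U: "distr P \<Longrightarrow> min_product_divergence W P \<le> U W"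
  unfolding U_eq_SUP_min_product_divergence by (rule SUP_upper) simp

lemma min_product_divergence_le: "distr Q \<Longrightarrow> min_product_divergence W P \<le> product_divergence W P Q"
  unfolding min_product_divergence_def by (rule INF_lower) simp

lemma distr_uniform: "distr (\<lambda>_::'a::finite. 1 / real CARD('a))"
  by (simp add: distr_def)

lemma distr_le_1: "distr P \<Longrightarrow> P a \<le> 1"
  unfolding distr_def by (metis finite UNIV_I member_le_sum)

lemma U_nonneg: "channel W \<Longrightarrow> 0 \<le> U W"
  using min_product_divergence_nonneg min_product_divergence_le_U distr_uniform by (metis order_trans)

lemma U_eq_0_if_constant:
  assumes "channel W" "\<And>x x'. W x = W x'"
  shows "U W = 0"
proof (rule antisym)
  have "distr (W undefined)" using assms(1) by (simp add: channel_def)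
  have "min_product_divergence W P \<le> 0" if "distr P" for P
  proof -
    have "min_product_divergence W P \<le> product_divergence W P (W undefined)"
      using \<open>distr (W undefined)\<close> by (rule min_product_divergence_le)
    also have "\<dots> = 0"
    proof -
      have "KL (W undefined) (W x) = 0" for x by (metis assms(2) KL_self)
      then show ?thesis using that by (simp add: product_divergence_eq_sum)
    qed
    finally show ?thesis .
  qed
  then show "U W \<le> 0" unfolding U_eq_SUP_min_product_divergence by (auto intro: SUP_least)
qed (rule U_nonneg[OF assms(1)])

lemma U_pos_if_nonconstant:
  assumes ch: "channel W" and "W x \<noteq> W x'"
  shows "0 < U W"
proof -
  have "x \<noteq> x'" using assms(2) by auto
  have W: "\<And>a y. 0 \<le> W a y" "\<And>a. sum (W a) UNIV = 1"
    using ch by (auto simp: channel_def distr_def)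
  define P :: "'a \<Rightarrow> real" where "P a = (if a = x \<or> a = x' then 1/2 else 0)" for a
  have sum_pair: "(\<Sum>a\<in>UNIV. g a) = g x + g x'"
    if "\<And>a. a \<noteq> x \<Longrightarrow> a \<noteq> x' \<Longrightarrow> g a = 0" for g :: "'a \<Rightarrow> 'c::comm_monoid_add"
  proof -
    have "(\<Sum>a\<in>UNIV. g a) = (\<Sum>a\<in>{x, x'}. g a)" using that by (intro sum.mono_neutral_right) auto
    then show ?thesis using \<open>x \<noteq> x'\<close> by simp
  qed
  have "distr P" unfolding distr_def by (auto simp: sum_pair P_def)
  define Z where "Z = (\<Sum>y\<in>UNIV. sqrt (W x y * W x' y))"
  obtain y0 where "W x y0 \<noteq> W x' y0" using assms(2) by auto
  have "Z < (\<Sum>y\<in>UNIV. (W x y + W x' y) / 2)"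
    unfolding Z_def
  proof (rule sum_strict_mono_ex1)
    show "\<forall>y\<in>UNIV. sqrt (W x y * W x' y) \<le> (W x y + W x' y) / 2"
      using W(1) arith_geo_mean_sqrt by blast
    show "\<exists>y\<in>UNIV. sqrt (W x y * W x' y) < (W x y + W x' y) / 2"
      using W(1) \<open>W x y0 \<noteq> W x' y0\<close> sqrt_mult_less_mean by blast
  qed simp
  also have "\<dots> = 1" using W(2) by (simp add: sum.distrib flip: sum_divide_distrib)
  finally have "Z < 1" .
  have "ereal (1 - Z) \<le> product_divergence W P Q" if "distr Q" for Q
  proof -
    have "product_divergence W P Q = ereal (1/2) * KL Q (W x) + ereal (1/2) * KL Q (W x')"
      using \<open>distr P\<close> \<open>x \<noteq> x'\<close>
      by (subst product_divergence_eq_sum) (auto simp: sum_pair P_def zero_ereal_def[symmetric])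
    then show ?thesis unfolding Z_def using that W(1) by (simp add: KL_mean_ge_one_minus_bhattacharyya)
  qed
  then have "ereal (1 - Z) \<le> min_product_divergence W P"
    unfolding min_product_divergence_def by (auto intro: INF_greatest)
  also have "\<dots> \<le> U W" using \<open>distr P\<close> by (rule min_product_divergence_le_U)
  finally show ?thesis using \<open>Z < 1\<close> by (simp add: order_less_le_trans[of 0 "ereal (1 - Z)"])
qed

lemma U_finite_if_common_output:
  assumes ch: "channel W" and pos: "\<And>x. 0 < W x y0"
  shows "U W < \<infinity>"
proof -
  define Q0 where "Q0 = (\<lambda>y. if y = y0 then 1 else 0 :: real)"
  have "distr Q0" by (simp add: distr_def Q0_def)
  have "min_product_divergence W P \<le> ereal (\<Sum>x\<in>UNIV. - ln (W x y0))" if "distr P" for P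
  proof -
    have "min_product_divergence W P \<le> product_divergence W P Q0"
      using \<open>distr Q0\<close> by (rule min_product_divergence_le)
    also have "\<dots> = ereal (\<Sum>x\<in>UNIV. P x * - ln (W x y0))"
      using that pos by (simp add: product_divergence_eq_sum Q0_def KL_point_mass)
    also have "\<dots> \<le> ereal (\<Sum>x\<in>UNIV. - ln (W x y0))"
    proof -
      have "P x * - ln (W x y0) \<le> - ln (W x y0)" for x
      proof (rule mult_left_le_one_le)
        show "0 \<le> - ln (W x y0)"
          using pos[of x] distr_le_1[of "W x" y0] ch by (simp add: channel_def)
      qed (use that distr_le_1[OF that] in \<open>auto simp: distr_def\<close>)
      then show ?thesis by (simp add: sum_mono)
    qed
    finally show ?thesis .
  qed
  then have "U W \<le> ereal (\<Sum>x\<in>UNIV. - ln (W x y0))"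
    unfolding U_eq_SUP_min_product_divergence by (auto intro: SUP_least)
  also have "\<dots> < \<infinity>" by simp
  finally show ?thesis .
qed

lemma U_infinite_if_no_common_output:
  assumes ch: "channel W" and zero: "\<And>y. \<exists>x. W x y = 0"
  shows "U W = \<infinity>"
proof -
  define P :: "'a \<Rightarrow> real" where "P = (\<lambda>_. 1 / real CARD('a))"
  have "distr P" unfolding P_def by (rule distr_uniform)
  have "product_divergence W P Q = \<infinity>" if "distr Q" for Q
  proof -
    have "sum Q UNIV \<noteq> 0" using that by (simp add: distr_def)
    then obtain y where "Q y \<noteq> 0" by (meson sum.neutral)
    moreover obtain x where "W x y = 0" using zero by blast
    ultimately have "KL Q (W x) = \<infinity>" by (auto simp: KL_def)
    then have "ereal (P x) * KL Q (W x) = \<infinity>" by (simp add: P_def)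
    then have "(\<Sum>x\<in>UNIV. ereal (P x) * KL Q (W x)) = \<infinity>" by (metis finite UNIV_I sum_Pinfty)
    then show ?thesis using \<open>distr P\<close> by (simp add: product_divergence_eq_sum)
  qed
  then have "min_product_divergence W P = \<infinity>"
    unfolding min_product_divergence_def top_ereal_def[symmetric] INF_top_conv by simp
  then show ?thesis using min_product_divergence_le_U[OF \<open>distr P\<close>, of W] by simp
qed

lemma U_eq_0_iff:
  assumes "channel W"
  shows "U W = 0 \<longleftrightarrow> (\<forall>x x'. W x = W x')"
  using U_eq_0_if_constant[OF assms] U_pos_if_nonconstant[OF assms] by (metis order_less_irrefl)

lemma U_finite_iff:
  assumes "channel W"
  shows "U W < \<infinity> \<longleftrightarrow> (\<exists>y. \<forall>x. 0 < W x y)"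
proof
  assume "U W < \<infinity>"
  then have "\<not> (\<forall>y. \<exists>x. W x y = 0)" using U_infinite_if_no_common_output[OF assms] by force
  moreover have "\<And>x y. 0 \<le> W x y" using assms by (simp add: channel_def distr_def)
  ultimately show "\<exists>y. \<forall>x. 0 < W x y" by (auto simp: order_less_le)
qed (use U_finite_if_common_output[OF assms] in blast)

lemma INF_ereal_mult_left:
  assumes "0 < c"
  shows "(INF a\<in>A. ereal c * f a) = ereal c * (INF a\<in>A. f a)"
  using ereal_Inf_cmult[OF assms, of "\<lambda>x. x \<in> f ` A"] by (simp add: setcompr_eq_image image_image)

lemma min_product_divergence_convex:
  assumes c1: "channel W1" and c2: "channel W2" and t: "0 < t" "t < 1" and "distr P"
  shows "min_product_divergence (\<lambda>x y. t * W1 x y + (1 - t) * W2 x y) P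
    \<le> ereal t * min_product_divergence W1 P + ereal (1 - t) * min_product_divergence W2 P"
proof -
  let ?W = "\<lambda>x y. t * W1 x y + (1 - t) * W2 x y" and ?D = "{Q. distr Q}"
  have nonneg: "0 \<le> product_divergence W P Q" if "channel W" "Q \<in> ?D" for W Q
    using that \<open>distr P\<close> product_divergence_nonneg by auto
  have "?D \<noteq> {}" using distr_uniform by blast
  have "min_product_divergence ?W P
      \<le> ereal t * product_divergence W1 P Q1 + ereal (1 - t) * product_divergence W2 P Q2"
    if "distr Q1" "distr Q2" for Q1 Q2
  proof -
    have "distr (\<lambda>y. t * Q1 y + (1 - t) * Q2 y)"
      using that t by (auto simp: distr_def sum.distrib simp flip: sum_distrib_left)
    then have "min_product_divergence ?W P
        \<le> product_divergence ?W P (\<lambda>y. t * Q1 y + (1 - t) * Q2 y)"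
      by (rule min_product_divergence_le)
    also have "\<dots> = KL
        (\<lambda>z. t * (case z of (x, y) \<Rightarrow> P x * Q1 y) + (1 - t) * (case z of (x, y) \<Rightarrow> P x * Q2 y))
        (\<lambda>z. t * (case z of (x, y) \<Rightarrow> P x * W1 x y) + (1 - t) * (case z of (x, y) \<Rightarrow> P x * W2 x y))"
      unfolding product_divergence_def case_prod_unfold by (simp add: algebra_simps)
    also have "\<dots> \<le> ereal t * product_divergence W1 P Q1 + ereal (1 - t) * product_divergence W2 P Q2"
      unfolding product_divergence_def using t that c1 c2 \<open>distr P\<close>
      by (intro KL_jointly_convex) (auto simp: distr_def channel_def split: prod.splits)
    finally show ?thesis .
  qed
  then have "min_product_divergence ?W P
      \<le> (INF Q1\<in>?D. INF Q2\<in>?D.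
            ereal t * product_divergence W1 P Q1 + ereal (1 - t) * product_divergence W2 P Q2)"
    by (auto intro!: INF_greatest)
  also have "\<dots> = (INF Q1\<in>?D. ereal t * product_divergence W1 P Q1
      + (INF Q2\<in>?D. ereal (1 - t) * product_divergence W2 P Q2))"
    using \<open>?D \<noteq> {}\<close> t nonneg[OF c1] nonneg[OF c2] by (intro INF_cong refl INF_ereal_add_right) auto
  also have "\<dots> = (INF Q1\<in>?D. ereal t * product_divergence W1 P Q1)
      + (INF Q2\<in>?D. ereal (1 - t) * product_divergence W2 P Q2)"
  proof (rule INF_ereal_add_left)
    have "0 \<le> (INF Q2\<in>?D. ereal (1 - t) * product_divergence W2 P Q2)"
      using t nonneg[OF c2] by (auto intro!: INF_greatest)
    then show "(INF Q2\<in>?D. ereal (1 - t) * product_divergence W2 P Q2) \<noteq> -\<infinity>" by auto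
  qed (use \<open>?D \<noteq> {}\<close> t nonneg[OF c1] in auto)
  also have "\<dots> = ereal t * min_product_divergence W1 P + ereal (1 - t) * min_product_divergence W2 P"
    using t by (simp add: min_product_divergence_def INF_ereal_mult_left)
  finally show ?thesis .
qed

lemma U_convex:
  fixes W1 W2 :: "'x::finite \<Rightarrow> 'y::finite \<Rightarrow> real"
  assumes c1: "channel W1" and c2: "channel W2" and t: "0 \<le> t" "t \<le> 1"
  shows "U (\<lambda>x y. t * W1 x y + (1 - t) * W2 x y) \<le> ereal t * U W1 + ereal (1 - t) * U W2"
proof -
  consider "t = 0" | "t = 1" | "0 < t \<and> t < 1" using t by linarith
  then show ?thesis
  proof cases
    case 3
    show ?thesis unfolding U_eq_SUP_min_product_divergence[of "\<lambda>x y. t * W1 x y + (1 - t) * W2 x y"]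
    proof (rule SUP_least)
      fix P :: "'x \<Rightarrow> real" assume "P \<in> {P. distr P}"
      then have "distr P" by simp
      have "min_product_divergence (\<lambda>x y. t * W1 x y + (1 - t) * W2 x y) P
          \<le> ereal t * min_product_divergence W1 P + ereal (1 - t) * min_product_divergence W2 P"
        using 3 c1 c2 \<open>distr P\<close> by (intro min_product_divergence_convex) auto
      also have "\<dots> \<le> ereal t * U W1 + ereal (1 - t) * U W2"
        using 3 min_product_divergence_le_U[OF \<open>distr P\<close>] by (intro add_mono ereal_mult_left_mono) auto
      finally show "min_product_divergence (\<lambda>x y. t * W1 x y + (1 - t) * W2 x y) P
          \<le> ereal t * U W1 + ereal (1 - t) * U W2" .
    qed
  qed (simp_all flip: zero_ereal_def)
qed

theorem mainTheorem18:
  fixes W :: "'x::finite \<Rightarrow> 'y::finite \<Rightarrow> real"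
  assumes "channel W"
  shows "(U W \<ge> 0 \<and> (U W = 0 \<longleftrightarrow> (\<forall>x x'. W x = W x')))
    \<and> (U W < \<infinity> \<longleftrightarrow> (\<exists>y. \<forall>x. W x y > 0))
    \<and> (\<forall>(W1 :: 'x \<Rightarrow> 'y \<Rightarrow> real) W2 (t::real). channel W1 \<and> channel W2 \<and> 0 \<le> t \<and> t \<le> 1 \<longrightarrow>
           U (\<lambda>x y. t * W1 x y + (1 - t) * W2 x y) \<le> ereal t * U W1 + ereal (1 - t) * U W2)"
  using U_nonneg[OF assms] U_eq_0_iff[OF assms] U_finite_iff[OF assms] U_convex by blast

end
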